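(* Let $0<\theta<1$ and let $\phi_1,\phi_2$ be Hecke–Maass cusp forms for $\mathrm{PSL}_2(\mathbb Z)$ with Laplace eigenvalues $s_1(1-s_1)$, $s_2(1-s_2)$ and Hecke eigenvalues $\lambda_{\phi_1}(n),\lambda_{\phi_2}(n)$. Then $B_\theta(1_B\phi_1,1_B\phi_2)=0$ unless $\phi_1$ and $\phi_2$ are both even. If both are even, then \[ B_\theta(1_B\phi_1,1_B\phi_2)=4\pi\sum_{m,n\ge1}\frac{\tau_1((m,n))\lambda_{\phi_1}(m)\lambda_{\phi_2}(n)}{(mn)^{1/2}}\,I_\theta^{s_1,s_2}(m,n), \quad I_\theta^{s_1,s_2}(m,n)=\int_{\max(m,n)}^\infty K_{s_1-1/2}(2\pi y)\overline{K_{s_2-1/2}(2\pi y)}\,f_{\theta,m,n}(y)\frac{dy}{y}, \] where $f_{\theta,m,n}(y)=1$ if $0<\theta<1/2$, $=e^{-2\pi^2y^2(m^2+n^2)}$ if $\theta=1/2$, and $=0$ if $\theta>1/2$.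
   Context: $M=\mathrm{PSL}_2(\mathbb Z)\backslash\mathbb H$, $z=x+iy$, $e(z)=e^{2\pi iz}$, $B=\{z\in M:\Im z>1\}$ (region $y>1$ of the standard fundamental domain), $1_B$ its indicator function. A Hecke–Maass cusp form $\phi$ with eigenvalue $s(1-s)$ and Hecke eigenvalues $\lambda_\phi(n)$ is normalized to have Fourier expansion $\phi(x+iy)=\sum_{m\ne0}\epsilon_{\phi,m}\,2\lambda_\phi(|m|)\,y^{1/2}K_{s-1/2}(2\pi|m|y)\,e(mx)$, where $\epsilon_{\phi,m}=1$ if $\phi$ is even and $\epsilon_{\phi,m}=\mathrm{sgn}(m)$ if $\phi$ is odd; $K_\nu$ is the $K$-Bessel function. $\tau_1(n)=\sum_{d\mid n}d$. For a function $\psi$ supported in $B$ let $V_m^\psi(y)=\int_0^1\psi(x+iy)e(-mx)dx$ for $y>1$ and $V_m^\psi(y)=0$ for $y\le 1$. For such $\psi$ whose zero-th coefficient $V_0^\psi$ vanishes identically (as is the case for $1_B\phi$), $B_\theta$ is defined by $B_\theta(\psi_1,\psi_2)=\frac\pi4\sum_{m,n\neq0}\tau_1((|m|,|n|))\int_0^\infty V_m^{\psi_1}(y/|m|)\overline{V_n^{\psi_2}(y/|n|)}f_{\theta,m,n}(y)\frac{dy}{y^2}$, with $f_{\theta,m,n}$ as in the claim (the series converges absolutely). *)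

theory Defs
  imports "HOL-Analysis.Analysis"
begin

definition ee :: "complex \<Rightarrow> complex" where
  "ee z = exp (2 * of_real pi * \<i> * z)"

definition besselK :: "complex \<Rightarrow> real \<Rightarrow> complex" where
  "besselK \<nu> x = (\<integral>t\<in>{0<..}. complex_of_real (exp (- x * cosh t)) * cosh (\<nu> * complex_of_real t) \<partial>lborel)"

definition tau1 :: "nat \<Rightarrow> nat" where
  "tau1 n = (\<Sum>d\<in>{d. d dvd n}. d)"

definition eps :: "bool \<Rightarrow> int \<Rightarrow> complex" where
  "eps ev m = (if ev then 1 else of_int (sgn m))"

definition hecke_op :: "nat \<Rightarrow> (complex \<Rightarrow> complex) \<Rightarrow> complex \<Rightarrow> complex" where
  "hecke_op n \<phi> z = (1 / of_real (sqrt (real n))) *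
     (\<Sum>(a, b, d)\<in>{(a, b, d). a * d = n \<and> b < d}. \<phi> ((of_nat a * z + of_nat b) / of_nat d))"

definition laplace_eigenfunction :: "(complex \<Rightarrow> complex) \<Rightarrow> complex \<Rightarrow> bool" where
  "laplace_eigenfunction \<phi> \<mu> \<longleftrightarrow>
    (\<exists>Dx Dy :: real \<Rightarrow> real \<Rightarrow> complex.
      (\<forall>u v. v > 0 \<longrightarrow>
         ((\<lambda>t. \<phi> (Complex t v)) has_vector_derivative Dx u v) (at u) \<and>
         ((\<lambda>t. \<phi> (Complex u t)) has_vector_derivative Dy u v) (at v)) \<and>
      (\<forall>x y. y > 0 \<longrightarrow>
         (\<exists>a b. ((\<lambda>t. Dx t y) has_vector_derivative a) (at x) \<and>
                ((\<lambda>t. Dy x t) has_vector_derivative b) (at y) \<and>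
                - complex_of_real (y\<^sup>2) * (a + b) = \<mu> * \<phi> (Complex x y))))"

text \<open>Hecke--Maass cusp form for PSL_2(Z) (as a function on the upper half plane),
  with spectral parameter s (eigenvalue s(1-s)), Hecke eigenvalues lam, parity ev
  (True = even, False = odd), normalized by the stated Fourier expansion.\<close>
definition hecke_maass_cusp_form ::
  "(complex \<Rightarrow> complex) \<Rightarrow> complex \<Rightarrow> (nat \<Rightarrow> real) \<Rightarrow> bool \<Rightarrow> bool" where
  "hecke_maass_cusp_form \<phi> s lam ev \<longleftrightarrow>
     (\<forall>z. Im z > 0 \<longrightarrow> \<phi> (z + 1) = \<phi> z \<and> \<phi> (- 1 / z) = \<phi> z) \<and>
     laplace_eigenfunction \<phi> (s * (1 - s)) \<and>
     (\<forall>n\<ge>1. \<forall>z. Im z > 0 \<longrightarrow> hecke_op n \<phi> z = complex_of_real (lam n) * \<phi> z) \<and>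
     (\<forall>z. Im z > 0 \<longrightarrow> \<phi> (- cnj z) = (if ev then \<phi> z else - \<phi> z)) \<and>
     (\<forall>x y. y > 0 \<longrightarrow>
        ((\<lambda>m::int. eps ev m * 2 * complex_of_real (lam (nat \<bar>m\<bar>)) * complex_of_real (sqrt y)
              * besselK (s - 1/2) (2 * pi * real_of_int \<bar>m\<bar> * y) * ee (of_int m * of_real x))
          has_sum \<phi> (Complex x y)) {m. m \<noteq> 0})"

text \<open>The function 1_B phi, lifted to the strip: equals phi for Im z > 1, 0 otherwise.\<close>
definition restrictB :: "(complex \<Rightarrow> complex) \<Rightarrow> complex \<Rightarrow> complex" where
  "restrictB \<phi> z = (if Im z > 1 then \<phi> z else 0)"

definition Vcoef :: "int \<Rightarrow> (complex \<Rightarrow> complex) \<Rightarrow> real \<Rightarrow> complex" where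
  "Vcoef m \<psi> y = (if y > 1 then (\<integral>x\<in>{0..1}. \<psi> (Complex x y) * ee (- of_int m * of_real x) \<partial>lborel) else 0)"

definition fth :: "real \<Rightarrow> real \<Rightarrow> real \<Rightarrow> real \<Rightarrow> real" where
  "fth \<theta> m n y = (if \<theta> < 1/2 then 1
                   else if \<theta> = 1/2 then exp (- 2 * pi\<^sup>2 * y\<^sup>2 * (m\<^sup>2 + n\<^sup>2)) else 0)"

definition B_theta :: "real \<Rightarrow> (complex \<Rightarrow> complex) \<Rightarrow> (complex \<Rightarrow> complex) \<Rightarrow> complex" where
  "B_theta \<theta> \<psi>1 \<psi>2 = complex_of_real (pi / 4) *
     (\<Sum>\<^sub>\<infinity>(m, n)\<in>{(m::int, n::int). m \<noteq> 0 \<and> n \<noteq> 0}.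
        of_nat (tau1 (gcd (nat \<bar>m\<bar>) (nat \<bar>n\<bar>))) *
        (\<integral>y\<in>{0<..}. Vcoef m \<psi>1 (y / real_of_int \<bar>m\<bar>) * cnj (Vcoef n \<psi>2 (y / real_of_int \<bar>n\<bar>))
             * complex_of_real (fth \<theta> (of_int m) (of_int n) y / y\<^sup>2) \<partial>lborel))"

definition I_theta :: "real \<Rightarrow> complex \<Rightarrow> complex \<Rightarrow> nat \<Rightarrow> nat \<Rightarrow> complex" where
  "I_theta \<theta> s1 s2 m n = (\<integral>y\<in>{real (max m n)<..}.
      besselK (s1 - 1/2) (2 * pi * y) * cnj (besselK (s2 - 1/2) (2 * pi * y))
      * complex_of_real (fth \<theta> (real m) (real n) y / y) \<partial>lborel)"

end

theory Submission
  imports Defs "HOL-Library.Nat_Bijection"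
begin

(*
  For y > 1 the Fourier expansion of phi gives, by orthogonality of the characters and termwise
  integration (the expansion converges absolutely), V_m(y) = 2 eps_m lambda(|m|) sqrt y K(2 pi |m| y).
  Substituting this, the (m,n) term of B_theta becomes eps_{phi1,m} eps_{phi2,n} times
  4 lambda1(|m|) lambda2(|n|) / sqrt |mn| times I_theta(|m|,|n|): the integrand vanishes for
  y <= max(|m|,|n|), and sqrt(y/|m|) sqrt(y/|n|) / y^2 = 1 / (sqrt |mn| y).
  Reflecting m (or n) permutes the index set and flips the sign of the term when phi1 (or phi2)
  is odd, so the sum vanishes; for two even forms the four sign quadrants contribute equally.
*)

lemma ee_add: "ee a * ee b = ee (a + b)"
  unfolding ee_def by (simp add: exp_add[symmetric] algebra_simps)

lemma ee_of_int: "ee (of_int j) = 1"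
  unfolding ee_def by (simp add: mult.commute mult.left_commute)

lemma norm_ee_of_int_mult: "norm (ee (of_int k * of_real x)) = 1"
  unfolding ee_def by (simp add: norm_exp_eq_Re)

lemma ee_mult_ee_neg: "ee (of_int k * of_real x) * ee (- of_int m * of_real x) = ee (of_int (k - m) * of_real x)"
  by (simp add: ee_add algebra_simps)

lemma set_integrable_ee_unit_interval:
  "set_integrable lborel {0..1::real} (\<lambda>x. ee (c * of_real x))"
  unfolding set_integrable_def ee_def
  by (rule borel_integrable_compact) (auto intro!: continuous_intros)

lemma integral_ee_unit_interval:
  fixes j :: int
  shows "(\<integral>x\<in>{0..1}. ee (of_int j * of_real x) \<partial>lborel) = (if j = 0 then 1 else 0)"
proof (cases "j = 0")
  case True
  then show ?thesis by (simp add: ee_def set_integral_const)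
next
  case False
  define c where "c = 2 * of_real pi * \<i> * (of_int j :: complex)"
  have "c \<noteq> 0" using False by (simp add: c_def)
  have ee_exp: "ee (of_int j * of_real x) = exp (c * of_real x)" for x
    by (simp add: ee_def c_def algebra_simps)
  have "(LBINT x=ereal 0..ereal 1. exp (c * of_real x)) = exp (c * of_real 1) / c - exp (c * of_real 0) / c"
  proof (rule interval_integral_FTC_finite)
    show "continuous_on {min 0 1..max 0 1} (\<lambda>x::real. exp (c * of_real x))"
      by (intro continuous_intros)
    fix x :: real
    have "((\<lambda>z. exp (c * z) / c) has_field_derivative exp (c * of_real x)) (at (of_real x))"
      using \<open>c \<noteq> 0\<close> by (auto intro!: derivative_eq_intros)
    from has_vector_derivative_real_field[OF this]
    show "((\<lambda>x::real. exp (c * of_real x) / c) has_vector_derivative exp (c * of_real x))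
        (at x within {min 0 1..max 0 1})" .
  qed
  moreover have "exp (c * of_real 1) = 1" using ee_of_int[of j] ee_exp[of 1] by simp
  ultimately show ?thesis
    using False interval_integral_Icc[of 0 1 "\<lambda>x. exp (c * of_real x)"] by (simp add: ee_exp)
qed

lemma set_integral_unit_interval_suminf_ee:
  fixes a :: "nat \<Rightarrow> complex" and k :: "nat \<Rightarrow> int"
  assumes a: "summable (\<lambda>i. norm (a i))"
  shows "(\<integral>x\<in>{0..1}. (\<Sum>i. a i * ee (of_int (k i) * of_real x)) \<partial>lborel)
       = (\<Sum>i. if k i = 0 then a i else 0)"
proof -
  define u where "u i x = a i * (indicator {0..1::real} x *\<^sub>R ee (of_int (k i) * of_real x))" for i x
  have u_integrable: "integrable lborel (u i)" for i
    using set_integrable_ee_unit_interval unfolding u_def set_integrable_def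
    by (rule integrable_mult_right)
  have u_norm: "norm (u i x) = indicator {0..1} x * norm (a i)" for i x
    by (simp add: u_def norm_mult norm_ee_of_int_mult)
  have integrals_summable: "summable (\<lambda>i. \<integral>x. norm (u i x) \<partial>lborel)"
    using a by (simp add: u_norm)
  have pointwise_summable: "AE x in lborel. summable (\<lambda>i. norm (u i x))"
    using a by (simp add: u_norm summable_mult)
  have "summable (\<lambda>i. a i * ee (of_int (k i) * of_real x))" for x
    by (rule summable_norm_cancel) (use a in \<open>simp add: norm_mult norm_ee_of_int_mult\<close>)
  then have "indicator {0..1} x *\<^sub>R (\<Sum>i. a i * ee (of_int (k i) * of_real x)) = (\<Sum>i. u i x)" for x
    by (simp add: u_def mult_scaleR_right suminf_scaleR_right)
  then have "(\<integral>x\<in>{0..1}. (\<Sum>i. a i * ee (of_int (k i) * of_real x)) \<partial>lborel) = (\<integral>x. (\<Sum>i. u i x) \<partial>lborel)"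
    unfolding set_lebesgue_integral_def by (simp only:)
  also have "\<dots> = (\<Sum>i. integral\<^sup>L lborel (u i))"
    by (rule integral_suminf[OF u_integrable pointwise_summable integrals_summable])
  also have "(\<Sum>i. integral\<^sup>L lborel (u i)) = (\<Sum>i. if k i = 0 then a i else 0)"
  proof (rule arg_cong[where f = suminf], rule ext)
    fix i
    have "integral\<^sup>L lborel (u i) = a i * (\<integral>x\<in>{0..1}. ee (of_int (k i) * of_real x) \<partial>lborel)"
      unfolding u_def set_lebesgue_integral_def by (rule integral_mult_right_zero)
    then show "integral\<^sup>L lborel (u i) = (if k i = 0 then a i else 0)"
      by (simp add: integral_ee_unit_interval)
  qed
  finally show ?thesis .
qed

lemma fourier_coefficient_of_has_sum:
  fixes c :: "int \<Rightarrow> complex" and f :: "real \<Rightarrow> complex"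
  assumes f: "\<And>x. ((\<lambda>k. c k * ee (of_int k * of_real x)) has_sum f x) UNIV"
  shows "(\<integral>x\<in>{0..1}. f x * ee (- of_int m * of_real x) \<partial>lborel) = c m"
proof -
  have d: "bij_betw int_decode UNIV UNIV" using bij_int_decode by (simp add: bij_betw_def)
  \<comment> \<open>Summability in \<open>\<complex>\<close> is absolute, which licenses termwise integration.\<close>
  have "c summable_on UNIV" using f[of 0] by (auto simp: summable_on_def ee_def)
  then have "(\<lambda>k. norm (c k)) summable_on UNIV"
    using summable_on_iff_abs_summable_on_complex by blast
  then have "(\<lambda>i. norm (c (int_decode i))) summable_on UNIV"
    using summable_on_reindex_bij_betw[OF d, of "\<lambda>k. norm (c k)"] by simp
  then have c_summable: "summable (\<lambda>i. norm (c (int_decode i)))"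
    by (simp add: summable_on_UNIV_nonneg_real_iff)
  have series: "f x * ee (- of_int m * of_real x) = (\<Sum>i. c (int_decode i) * ee (of_int (int_decode i - m) * of_real x))" for x
  proof -
    have "((\<lambda>i. c (int_decode i) * ee (of_int (int_decode i) * of_real x)) has_sum f x) UNIV"
      using f[of x] has_sum_reindex_bij_betw[OF d, of "\<lambda>k. c k * ee (of_int k * of_real x)"] by simp
    then have "(\<lambda>i. c (int_decode i) * ee (of_int (int_decode i) * of_real x) * ee (- of_int m * of_real x))
        sums (f x * ee (- of_int m * of_real x))"
      by (intro sums_mult2 has_sum_imp_sums)
    then show ?thesis unfolding mult.assoc ee_mult_ee_neg by (rule sums_unique)
  qed
  have "(\<integral>x\<in>{0..1}. f x * ee (- of_int m * of_real x) \<partial>lborel)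
      = (\<Sum>i. if int_decode i - m = 0 then c (int_decode i) else 0)"
    unfolding series by (rule set_integral_unit_interval_suminf_ee[OF c_summable])
  also have "\<dots> = (\<Sum>i. if i = int_encode m then c m else 0)"
  proof (intro arg_cong[where f = suminf] ext)
    fix i
    have "int_decode i = m \<longleftrightarrow> i = int_encode m" by (metis int_decode_inverse int_encode_inverse)
    then show "(if int_decode i - m = 0 then c (int_decode i) else 0) = (if i = int_encode m then c m else 0)"
      by auto
  qed
  also have "\<dots> = c m"
    using sums_single[of "int_encode m" "\<lambda>_. c m"] by (simp add: sums_iff)
  finally show ?thesis .
qed

lemma Vcoef_restrictB:
  assumes H: "hecke_maass_cusp_form \<phi> s lam ev" and "m \<noteq> 0" and "y > 1"
  shows "Vcoef m (restrictB \<phi>) y = eps ev m * 2 * complex_of_real (lam (nat \<bar>m\<bar>))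
           * complex_of_real (sqrt y) * besselK (s - 1/2) (2 * pi * real_of_int \<bar>m\<bar> * y)"
proof -
  define a where "a k = eps ev k * 2 * complex_of_real (lam (nat \<bar>k\<bar>))
           * complex_of_real (sqrt y) * besselK (s - 1/2) (2 * pi * real_of_int \<bar>k\<bar> * y)" for k
  define c where "c k = (if k = 0 then 0 else a k)" for k
  have "((\<lambda>k. c k * ee (of_int k * of_real x)) has_sum \<phi> (Complex x y)) UNIV" for x
  proof -
    have "((\<lambda>k. a k * ee (of_int k * of_real x)) has_sum \<phi> (Complex x y)) {k. k \<noteq> 0}"
      using H \<open>y > 1\<close> unfolding hecke_maass_cusp_form_def a_def by auto
    then show ?thesis
      by (subst has_sum_cong_neutral[where T = "{k. k \<noteq> 0}" and g = "\<lambda>k. a k * ee (of_int k * of_real x)"])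
        (auto simp: c_def)
  qed
  then have "(\<integral>x\<in>{0..1}. \<phi> (Complex x y) * ee (- of_int m * of_real x) \<partial>lborel) = c m"
    by (rule fourier_coefficient_of_has_sum)
  then show ?thesis using assms(2,3) by (simp add: Vcoef_def restrictB_def c_def a_def)
qed

lemma cnj_eps [simp]: "cnj (eps ev m) = eps ev m"
  by (simp add: eps_def)

lemma Vcoef_restrictB_product:
  assumes H1: "hecke_maass_cusp_form \<phi>1 s1 lam1 ev1" and H2: "hecke_maass_cusp_form \<phi>2 s2 lam2 ev2"
    and "m \<noteq> 0" and "n \<noteq> 0" and "t > real (max (nat \<bar>m\<bar>) (nat \<bar>n\<bar>))"
  shows "Vcoef m (restrictB \<phi>1) (t / real_of_int \<bar>m\<bar>) * cnj (Vcoef n (restrictB \<phi>2) (t / real_of_int \<bar>n\<bar>))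
           * complex_of_real (F / t\<^sup>2)
    = eps ev1 m * eps ev2 n
      * complex_of_real (4 * lam1 (nat \<bar>m\<bar>) * lam2 (nat \<bar>n\<bar>) / sqrt (real (nat \<bar>m\<bar> * nat \<bar>n\<bar>)))
      * (besselK (s1 - 1/2) (2 * pi * t) * cnj (besselK (s2 - 1/2) (2 * pi * t))
         * complex_of_real (F / t))"
proof -
  define a where "a = real_of_int \<bar>m\<bar>"
  define b where "b = real_of_int \<bar>n\<bar>"
  define K1 where "K1 = besselK (s1 - 1/2) (2 * pi * t)"
  define K2 where "K2 = besselK (s2 - 1/2) (2 * pi * t)"
  have "a > 0" "b > 0" "t > 0" "t / a > 1" "t / b > 1"
    using assms(3-5) by (auto simp: a_def b_def field_simps)
  have V1: "Vcoef m (restrictB \<phi>1) (t / a) = eps ev1 m * complex_of_real (2 * lam1 (nat \<bar>m\<bar>) * sqrt (t / a)) * K1"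
    using Vcoef_restrictB[OF H1 assms(3) \<open>t / a > 1\<close>] \<open>a > 0\<close> unfolding a_def K1_def by (simp add: mult.assoc)
  have V2: "Vcoef n (restrictB \<phi>2) (t / b) = eps ev2 n * complex_of_real (2 * lam2 (nat \<bar>n\<bar>) * sqrt (t / b)) * K2"
    using Vcoef_restrictB[OF H2 assms(4) \<open>t / b > 1\<close>] \<open>b > 0\<close> unfolding b_def K2_def by (simp add: mult.assoc)
  have sqrt_product: "sqrt (t / a) * sqrt (t / b) = t / sqrt (a * b)"
    using \<open>a > 0\<close> \<open>b > 0\<close> \<open>t > 0\<close>
    by (simp add: real_sqrt_mult[symmetric] real_sqrt_divide power2_eq_square[symmetric])
  have "2 * lam1 (nat \<bar>m\<bar>) * sqrt (t / a) * (2 * lam2 (nat \<bar>n\<bar>) * sqrt (t / b)) * (F / t\<^sup>2)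
      = 4 * lam1 (nat \<bar>m\<bar>) * lam2 (nat \<bar>n\<bar>) * (sqrt (t / a) * sqrt (t / b)) * (F / t\<^sup>2)"
    by (simp add: mult_ac)
  also have "\<dots> = 4 * lam1 (nat \<bar>m\<bar>) * lam2 (nat \<bar>n\<bar>) / sqrt (a * b) * (F / t)"
    unfolding sqrt_product using \<open>t > 0\<close> by (simp add: power2_eq_square field_simps)
  finally have real_factor: "2 * lam1 (nat \<bar>m\<bar>) * sqrt (t / a) * (2 * lam2 (nat \<bar>n\<bar>) * sqrt (t / b)) * (F / t\<^sup>2)
      = 4 * lam1 (nat \<bar>m\<bar>) * lam2 (nat \<bar>n\<bar>) / sqrt (a * b) * (F / t)" .
  have "real (nat \<bar>m\<bar> * nat \<bar>n\<bar>) = a * b" by (simp add: a_def b_def)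
  have "Vcoef m (restrictB \<phi>1) (t / a) * cnj (Vcoef n (restrictB \<phi>2) (t / b)) * complex_of_real (F / t\<^sup>2)
      = eps ev1 m * eps ev2 n * (K1 * cnj K2)
        * complex_of_real (2 * lam1 (nat \<bar>m\<bar>) * sqrt (t / a) * (2 * lam2 (nat \<bar>n\<bar>) * sqrt (t / b)) * (F / t\<^sup>2))"
    unfolding V1 V2 by (simp add: mult_ac)
  also have "\<dots> = eps ev1 m * eps ev2 n
      * complex_of_real (4 * lam1 (nat \<bar>m\<bar>) * lam2 (nat \<bar>n\<bar>) / sqrt (real (nat \<bar>m\<bar> * nat \<bar>n\<bar>)))
      * (K1 * cnj K2 * complex_of_real (F / t))"
    unfolding real_factor \<open>real (nat \<bar>m\<bar> * nat \<bar>n\<bar>) = a * b\<close> by (simp add: mult_ac)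
  finally show ?thesis unfolding a_def b_def K1_def K2_def .
qed

lemma fth_abs: "fth \<theta> (of_int m) (of_int n) y = fth \<theta> (real (nat \<bar>m\<bar>)) (real (nat \<bar>n\<bar>)) y"
  by (simp add: fth_def)

lemma B_theta_summand_restrictB:
  assumes H1: "hecke_maass_cusp_form \<phi>1 s1 lam1 ev1" and H2: "hecke_maass_cusp_form \<phi>2 s2 lam2 ev2"
    and "m \<noteq> 0" and "n \<noteq> 0"
  shows "(\<integral>y\<in>{0<..}. Vcoef m (restrictB \<phi>1) (y / real_of_int \<bar>m\<bar>) * cnj (Vcoef n (restrictB \<phi>2) (y / real_of_int \<bar>n\<bar>))
             * complex_of_real (fth \<theta> (of_int m) (of_int n) y / y\<^sup>2) \<partial>lborel)
    = eps ev1 m * eps ev2 n * complex_of_real (4 * lam1 (nat \<bar>m\<bar>) * lam2 (nat \<bar>n\<bar>) / sqrt (real (nat \<bar>m\<bar> * nat \<bar>n\<bar>)))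
      * I_theta \<theta> s1 s2 (nat \<bar>m\<bar>) (nat \<bar>n\<bar>)"
proof -
  define C where "C = eps ev1 m * eps ev2 n
      * complex_of_real (4 * lam1 (nat \<bar>m\<bar>) * lam2 (nat \<bar>n\<bar>) / sqrt (real (nat \<bar>m\<bar> * nat \<bar>n\<bar>)))"
  define J where "J y = besselK (s1 - 1/2) (2 * pi * y) * cnj (besselK (s2 - 1/2) (2 * pi * y))
      * complex_of_real (fth \<theta> (real (nat \<bar>m\<bar>)) (real (nat \<bar>n\<bar>)) y / y)" for y
  have integrand: "indicator {0<..} y *\<^sub>R (Vcoef m (restrictB \<phi>1) (y / real_of_int \<bar>m\<bar>)
        * cnj (Vcoef n (restrictB \<phi>2) (y / real_of_int \<bar>n\<bar>)) * complex_of_real (fth \<theta> (of_int m) (of_int n) y / y\<^sup>2))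
      = C * (indicator {real (max (nat \<bar>m\<bar>) (nat \<bar>n\<bar>))<..} y *\<^sub>R J y)" for y
  proof (cases "y > real (max (nat \<bar>m\<bar>) (nat \<bar>n\<bar>))")
    case True
    then show ?thesis
      using Vcoef_restrictB_product[OF H1 H2 assms(3,4) True] by (simp add: C_def J_def fth_abs)
  next
    case False
    then have "y \<le> 0 \<or> y / real_of_int \<bar>m\<bar> \<le> 1 \<or> y / real_of_int \<bar>n\<bar> \<le> 1"
      using assms(3,4) by (auto simp: field_simps)
    then show ?thesis using False by (auto simp: Vcoef_def)
  qed
  show ?thesis
    unfolding set_lebesgue_integral_def integrand I_theta_def C_def[symmetric] J_def[symmetric]
    by (rule integral_mult_right_zero)
qed

lemma B_theta_restrictB:
  assumes "hecke_maass_cusp_form \<phi>1 s1 lam1 ev1" and "hecke_maass_cusp_form \<phi>2 s2 lam2 ev2"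
  shows "B_theta \<theta> (restrictB \<phi>1) (restrictB \<phi>2) = complex_of_real (pi / 4) *
    (\<Sum>\<^sub>\<infinity>(m, n)\<in>{(m::int, n::int). m \<noteq> 0 \<and> n \<noteq> 0}. eps ev1 m * eps ev2 n * (4 *
       (complex_of_real (real (tau1 (gcd (nat \<bar>m\<bar>) (nat \<bar>n\<bar>))) * lam1 (nat \<bar>m\<bar>) * lam2 (nat \<bar>n\<bar>)
          / sqrt (real (nat \<bar>m\<bar> * nat \<bar>n\<bar>))) * I_theta \<theta> s1 s2 (nat \<bar>m\<bar>) (nat \<bar>n\<bar>))))"
  unfolding B_theta_def
proof (intro arg_cong[where f = "\<lambda>x. complex_of_real (pi / 4) * x"] infsum_cong, clarify)
  fix m n :: int
  assume "m \<noteq> 0" "n \<noteq> 0"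
  show "of_nat (tau1 (gcd (nat \<bar>m\<bar>) (nat \<bar>n\<bar>))) *
      (\<integral>y\<in>{0<..}. Vcoef m (restrictB \<phi>1) (y / real_of_int \<bar>m\<bar>) * cnj (Vcoef n (restrictB \<phi>2) (y / real_of_int \<bar>n\<bar>))
        * complex_of_real (fth \<theta> (of_int m) (of_int n) y / y\<^sup>2) \<partial>lborel)
    = eps ev1 m * eps ev2 n * (4 *
       (complex_of_real (real (tau1 (gcd (nat \<bar>m\<bar>) (nat \<bar>n\<bar>))) * lam1 (nat \<bar>m\<bar>) * lam2 (nat \<bar>n\<bar>)
          / sqrt (real (nat \<bar>m\<bar> * nat \<bar>n\<bar>))) * I_theta \<theta> s1 s2 (nat \<bar>m\<bar>) (nat \<bar>n\<bar>)))"
    unfolding B_theta_summand_restrictB[OF assms \<open>m \<noteq> 0\<close> \<open>n \<noteq> 0\<close>] by (simp add: mult_ac)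
qed

lemma infsum_Un_bij_invariant:
  fixes f :: "'a \<Rightarrow> 'b::{banach, ring_1}"
  assumes h: "bij_betw h X Y" and "X \<inter> Y = {}" and invariant: "\<And>x. x \<in> X \<Longrightarrow> f (h x) = f x"
  shows "infsum f (X \<union> Y) = 2 * infsum f X"
proof (cases "f summable_on X")
  case True
  have "infsum f Y = infsum (\<lambda>x. f (h x)) X" using infsum_reindex_bij_betw[OF h, of f] by simp
  also have "\<dots> = infsum f X" using invariant by (rule infsum_cong)
  finally have "infsum f Y = infsum f X" .
  moreover have "f summable_on Y"
    using True summable_on_cong[of X "\<lambda>x. f (h x)" f] invariant summable_on_reindex_bij_betw[OF h]
    by blast
  ultimately show ?thesis using infsum_Un_disjoint[OF True _ \<open>X \<inter> Y = {}\<close>] by (simp add: mult_2)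
next
  case False
  then have "\<not> f summable_on (X \<union> Y)" by (meson Un_upper1 summable_on_subset_banach)
  then show ?thesis using False by (simp add: infsum_not_exists)
qed

lemma infsum_bij_odd_eq_0:
  fixes f :: "'a \<Rightarrow> 'b::real_normed_vector"
  assumes h: "bij_betw h X X" and odd: "\<And>x. x \<in> X \<Longrightarrow> f (h x) = - f x"
  shows "infsum f X = 0"
proof -
  have "infsum f X = infsum (\<lambda>x. f (h x)) X" using infsum_reindex_bij_betw[OF h, of f] by simp
  also have "\<dots> = infsum (\<lambda>x. - f x) X" using odd by (rule infsum_cong)
  also have "\<dots> = - infsum f X" by (rule infsum_uminus)
  finally have "2 *\<^sub>R infsum f X = 0" by (simp add: scaleR_2 eq_neg_iff_add_eq_0)
  then show ?thesis by simp
qed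

lemma infsum_nonzero_int_pairs_abs:
  fixes T :: "nat \<Rightarrow> nat \<Rightarrow> 'b::{banach, ring_1}"
  shows "(\<Sum>\<^sub>\<infinity>(m, n)\<in>{(m::int, n::int). m \<noteq> 0 \<and> n \<noteq> 0}. T (nat \<bar>m\<bar>) (nat \<bar>n\<bar>))
     = 4 * (\<Sum>\<^sub>\<infinity>(m, n)\<in>{(m::nat, n::nat). 1 \<le> m \<and> 1 \<le> n}. T m n)"
proof -
  define f where "f = (\<lambda>(m::int, n::int). T (nat \<bar>m\<bar>) (nat \<bar>n\<bar>))"
  have "{(m, n). m \<noteq> 0 \<and> n \<noteq> 0} = {(m, n). m > 0 \<and> n \<noteq> 0} \<union> {(m::int, n::int). m < 0 \<and> n \<noteq> 0}"
    by auto
  also have "infsum f \<dots> = 2 * infsum f {(m, n). m > 0 \<and> n \<noteq> 0}"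
  proof (rule infsum_Un_bij_invariant)
    show "bij_betw (\<lambda>(m, n). (-m, n)) {(m::int, n::int). m > 0 \<and> n \<noteq> 0} {(m, n). m < 0 \<and> n \<noteq> 0}"
      by (rule bij_betwI[where g="\<lambda>(m, n). (-m, n)"]) auto
  qed (auto simp: f_def)
  also have "{(m, n). m > 0 \<and> n \<noteq> 0} = {(m, n). m > 0 \<and> n > 0} \<union> {(m::int, n::int). m > 0 \<and> n < 0}"
    by auto
  also have "infsum f \<dots> = 2 * infsum f {(m, n). m > 0 \<and> n > 0}"
  proof (rule infsum_Un_bij_invariant)
    show "bij_betw (\<lambda>(m, n). (m, -n)) {(m::int, n::int). m > 0 \<and> n > 0} {(m, n). m > 0 \<and> n < 0}"
      by (rule bij_betwI[where g="\<lambda>(m, n). (m, -n)"]) auto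
  qed (auto simp: f_def)
  also have "infsum f {(m, n). m > 0 \<and> n > 0} = (\<Sum>\<^sub>\<infinity>(m, n)\<in>{(m::nat, n::nat). 1 \<le> m \<and> 1 \<le> n}. T m n)"
  proof -
    have "bij_betw (\<lambda>(m, n). (int m, int n)) {(m, n). 1 \<le> m \<and> 1 \<le> n} {(m, n). m > 0 \<and> n > 0}"
      by (rule bij_betwI[where g="\<lambda>(m, n). (nat m, nat n)"]) auto
    from infsum_reindex_bij_betw[OF this, of f] show ?thesis
      by (simp add: f_def case_prod_beta')
  qed
  finally show ?thesis by (simp add: f_def mult.assoc)
qed

lemma infsum_nonzero_int_pairs_eps_eq_0:
  fixes T :: "nat \<Rightarrow> nat \<Rightarrow> complex"
  assumes "\<not> (ev1 \<and> ev2)"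
  shows "(\<Sum>\<^sub>\<infinity>(m, n)\<in>{(m::int, n::int). m \<noteq> 0 \<and> n \<noteq> 0}. eps ev1 m * eps ev2 n * T (nat \<bar>m\<bar>) (nat \<bar>n\<bar>)) = 0"
proof (rule infsum_bij_odd_eq_0)
  define h where "h = (if ev1 then (\<lambda>(m::int, n::int). (m, -n)) else (\<lambda>(m, n). (-m, n)))"
  show "bij_betw h {(m, n). m \<noteq> 0 \<and> n \<noteq> 0} {(m, n). m \<noteq> 0 \<and> n \<noteq> 0}"
    by (rule bij_betwI[where g=h]) (auto simp: h_def)
  show "(case h x of (m, n) \<Rightarrow> eps ev1 m * eps ev2 n * T (nat \<bar>m\<bar>) (nat \<bar>n\<bar>))
      = - (case x of (m, n) \<Rightarrow> eps ev1 m * eps ev2 n * T (nat \<bar>m\<bar>) (nat \<bar>n\<bar>))" for x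
    using assms by (cases x) (auto simp: h_def eps_def)
qed

theorem theorem1p2:
  fixes \<theta> :: real and \<phi>1 \<phi>2 :: "complex \<Rightarrow> complex" and s1 s2 :: complex
    and lam1 lam2 :: "nat \<Rightarrow> real" and ev1 ev2 :: bool
  assumes "0 < \<theta>" and "\<theta> < 1"
    and "hecke_maass_cusp_form \<phi>1 s1 lam1 ev1"
    and "hecke_maass_cusp_form \<phi>2 s2 lam2 ev2"
  shows "(\<not> (ev1 \<and> ev2) \<longrightarrow> B_theta \<theta> (restrictB \<phi>1) (restrictB \<phi>2) = 0) \<and>
         (ev1 \<and> ev2 \<longrightarrow> B_theta \<theta> (restrictB \<phi>1) (restrictB \<phi>2) =
            complex_of_real (4 * pi) *
            (\<Sum>\<^sub>\<infinity>(m, n)\<in>{(m::nat, n::nat). 1 \<le> m \<and> 1 \<le> n}.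
               complex_of_real (real (tau1 (gcd m n)) * lam1 m * lam2 n / sqrt (real (m * n)))
               * I_theta \<theta> s1 s2 m n))"
proof -
  define U where "U m n = complex_of_real (real (tau1 (gcd m n)) * lam1 m * lam2 n / sqrt (real (m * n)))
      * I_theta \<theta> s1 s2 m n" for m n
  note B = B_theta_restrictB[OF assms(3,4), of \<theta>, folded U_def]
  have "B_theta \<theta> (restrictB \<phi>1) (restrictB \<phi>2) = 0" if "\<not> (ev1 \<and> ev2)"
    unfolding B using infsum_nonzero_int_pairs_eps_eq_0[OF that] by simp
  moreover have "B_theta \<theta> (restrictB \<phi>1) (restrictB \<phi>2) =
      complex_of_real (4 * pi) * (\<Sum>\<^sub>\<infinity>(m, n)\<in>{(m::nat, n::nat). 1 \<le> m \<and> 1 \<le> n}. U m n)"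
    if "ev1" "ev2"
  proof -
    have "(\<Sum>\<^sub>\<infinity>(m, n)\<in>{(m::int, n::int). m \<noteq> 0 \<and> n \<noteq> 0}. eps ev1 m * eps ev2 n * (4 * U (nat \<bar>m\<bar>) (nat \<bar>n\<bar>)))
        = (\<Sum>\<^sub>\<infinity>(m, n)\<in>{(m::int, n::int). m \<noteq> 0 \<and> n \<noteq> 0}. 4 * U (nat \<bar>m\<bar>) (nat \<bar>n\<bar>))"
      using that by (intro infsum_cong) (auto simp: eps_def)
    also have "\<dots> = 4 * (\<Sum>\<^sub>\<infinity>(m, n)\<in>{(m::nat, n::nat). 1 \<le> m \<and> 1 \<le> n}. 4 * U m n)"
      by (rule infsum_nonzero_int_pairs_abs)
    also have "\<dots> = 16 * (\<Sum>\<^sub>\<infinity>(m, n)\<in>{(m::nat, n::nat). 1 \<le> m \<and> 1 \<le> n}. U m n)"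
      by (simp add: case_prod_beta' infsum_cmult_right')
    finally show ?thesis unfolding B by simp
  qed
  ultimately show ?thesis unfolding U_def by blast
qed

end
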